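(* Let $(T,\mathcal{V})$ be a tree decomposition of a graph $G$. For every node $t\in V(T)$, let $\mathscr{C}(t)$ be a set of cycles of $G$ each of which is fenced by $V_t$ but is not contained in $G[V_t]$ (i.e. its vertex set is not a subset of $V_t$). If $\mathscr{C}(t)\neq\emptyset$ for every node $t\in V(T)$, then there exist an edge $tt'\in E(T)$ and cycles $C\in\mathscr{C}(t)$ and $D\in\mathscr{C}(t')$ such that $\mathrm{Br}_t(C)=\mathrm{Br}_t(t')$ and $\mathrm{Br}_{t'}(D)=\mathrm{Br}_{t'}(t)$.
   Context: A tree decomposition of $G$ is a pair $(T,\mathcal{V})$ where $T$ is a tree and $\mathcal{V}=\{V_t : t\in V(T)\}$ is a collection of subsets (bags) of $V(G)$ such that every vertex of $G$ lies in some bag, every edge of $G$ has both ends in some bag, and for every vertex $v$ the set of nodes whose bags contain $v$ induces a connected subtree of $T$. For $S\subseteq V(G)$, $S$ separates a set $X$ of vertices if two vertices of $X$ lie in different components of $G-S$. A path or cycle $C'$ crosses $S$ if $S$ separates $V(C')$; otherwise $S$ fences $C'$. For distinct nodes $t,t'$, $\mathrm{Br}_t(t')$ denotes the component of $T-t$ containing $t'$. For a vertex $v\notin V_t$, $\mathrm{Br}_t(v)$ is the component of $T-t$ containing the nodes whose bags contain $v$. For a path or cycle $C'$ fenced by $V_t$ with $V(C')\not\subseteq V_t$, all $v\in V(C')\setminus V_t$ have the same $\mathrm{Br}_t(v)$, denoted $\mathrm{Br}_t(C')$. *)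

theory Defs
  imports Main
begin

definition graph :: "'a set \<Rightarrow> 'a set set \<Rightarrow> bool" where
  "graph V E \<longleftrightarrow> finite V \<and> (\<forall>e\<in>E. \<exists>u v. e = {u, v} \<and> u \<noteq> v \<and> u \<in> V \<and> v \<in> V)"

definition adj_in :: "'a set set \<Rightarrow> 'a set \<Rightarrow> 'a \<Rightarrow> 'a \<Rightarrow> bool" where
  "adj_in E W u v \<longleftrightarrow> u \<in> W \<and> v \<in> W \<and> {u, v} \<in> E"

definition connected_set :: "'a set set \<Rightarrow> 'a set \<Rightarrow> bool" where
  "connected_set E S \<longleftrightarrow> (\<forall>x\<in>S. \<forall>y\<in>S. (adj_in E S)\<^sup>*\<^sup>* x y)"

definition is_cycle :: "'a set \<Rightarrow> 'a set set \<Rightarrow> 'a list \<Rightarrow> bool" where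
  "is_cycle V E cs \<longleftrightarrow> length cs \<ge> 3 \<and> distinct cs \<and> set cs \<subseteq> V \<and>
     (\<forall>i < length cs. {cs ! i, cs ! ((i + 1) mod length cs)} \<in> E)"

definition tree :: "'n set \<Rightarrow> 'n set set \<Rightarrow> bool" where
  "tree VT ET \<longleftrightarrow> graph VT ET \<and> VT \<noteq> {} \<and> connected_set ET VT \<and> \<not> (\<exists>cs. is_cycle VT ET cs)"

definition tree_decomposition ::
  "'a set \<Rightarrow> 'a set set \<Rightarrow> 'n set \<Rightarrow> 'n set set \<Rightarrow> ('n \<Rightarrow> 'a set) \<Rightarrow> bool" where
  "tree_decomposition V E VT ET bag \<longleftrightarrow>
     tree VT ET \<and>
     (\<forall>t\<in>VT. bag t \<subseteq> V) \<and>
     (\<forall>v\<in>V. \<exists>t\<in>VT. v \<in> bag t) \<and>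
     (\<forall>e\<in>E. \<exists>t\<in>VT. e \<subseteq> bag t) \<and>
     (\<forall>v\<in>V. connected_set ET {t\<in>VT. v \<in> bag t})"

definition separates :: "'a set \<Rightarrow> 'a set set \<Rightarrow> 'a set \<Rightarrow> 'a set \<Rightarrow> bool" where
  "separates V E S X \<longleftrightarrow>
     (\<exists>x\<in>X. \<exists>y\<in>X. x \<in> V - S \<and> y \<in> V - S \<and> \<not> (adj_in E (V - S))\<^sup>*\<^sup>* x y)"

definition fences :: "'a set \<Rightarrow> 'a set set \<Rightarrow> 'a set \<Rightarrow> 'a list \<Rightarrow> bool" where
  "fences V E S C \<longleftrightarrow> \<not> separates V E S (set C)"

definition Br :: "'n set \<Rightarrow> 'n set set \<Rightarrow> 'n \<Rightarrow> 'n \<Rightarrow> 'n set" where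
  "Br VT ET t t' = {s. (adj_in ET (VT - {t}))\<^sup>*\<^sup>* t' s}"

text \<open>Br_t(v) for a vertex v not in V_t: the component of T - t containing the nodes whose bags contain v.\<close>
definition Br_vertex :: "'n set \<Rightarrow> 'n set set \<Rightarrow> ('n \<Rightarrow> 'a set) \<Rightarrow> 'n \<Rightarrow> 'a \<Rightarrow> 'n set" where
  "Br_vertex VT ET bag t v = Br VT ET t (SOME s. s \<in> VT \<and> v \<in> bag s)"

text \<open>Br_t(C) for C fenced by V_t and not contained in V_t: the common Br_t(v), v in V(C) - V_t.\<close>
definition Br_cycle :: "'n set \<Rightarrow> 'n set set \<Rightarrow> ('n \<Rightarrow> 'a set) \<Rightarrow> 'n \<Rightarrow> 'a list \<Rightarrow> 'n set" where
  "Br_cycle VT ET bag t C = Br_vertex VT ET bag t (SOME v. v \<in> set C \<and> v \<notin> bag t)"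

end

theory Submission
  imports Defs
begin

text \<open>
  Each node t has a cycle C of \<C>(t), and the branch of T - t containing C is the branch of some
  neighbour f(t) of t. So f maps every node of the finite tree T to a neighbour; following f from
  any node, some node must repeat, and since T has no cycles the repetition closes after two
  steps: f(f(t)) = t. The edge t f(t) is the required one.
\<close>

lemma finite_self_map_periodic_point:
  assumes "finite A" "x \<in> A" "f ` A \<subseteq> A"
  shows "\<exists>y\<in>A. \<exists>n>0. (f ^^ n) y = y"
proof -
  have orbit_in_A: "(f ^^ k) x \<in> A" for k
    by (induction k) (use assms in \<open>simp_all add: image_subset_iff\<close>)
  have "\<not> inj (\<lambda>k. (f ^^ k) x)"
  proof
    assume "inj (\<lambda>k. (f ^^ k) x)"
    then have "infinite (range (\<lambda>k. (f ^^ k) x))"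
      by (simp add: finite_image_iff)
    with orbit_in_A assms(1) show False
      by (meson finite_subset image_subsetI)
  qed
  then obtain i j where "i < j" "(f ^^ i) x = (f ^^ j) x"
    unfolding inj_def by (metis nat_neq_iff)
  moreover have "(f ^^ (j - i)) ((f ^^ i) x) = (f ^^ (j - i + i)) x"
    by (simp add: funpow_add)
  ultimately have "(f ^^ (j - i)) ((f ^^ i) x) = (f ^^ i) x"
    by simp
  with \<open>i < j\<close> orbit_in_A show ?thesis
    using zero_less_diff by blast
qed

lemma least_period_orbit_distinct:
  assumes period: "(f ^^ n) y = y"
    and least: "\<And>m. 0 < m \<Longrightarrow> m < n \<Longrightarrow> (f ^^ m) y \<noteq> y"
  shows "distinct (map (\<lambda>k. (f ^^ k) y) [0..<n])"
  unfolding distinct_map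
proof (intro conjI inj_onI)
  show "distinct [0..<n]" by simp
next
  have no_repeat: "(f ^^ a) y \<noteq> (f ^^ b) y" if "a < b" "b < n" for a b
  proof
    assume "(f ^^ a) y = (f ^^ b) y"
    then have "(f ^^ (n - b + a)) y = (f ^^ (n - b + b)) y"
      by (simp add: funpow_add)
    also have "\<dots> = y"
      using \<open>b < n\<close> period by simp
    finally show False
      using least[of "n - b + a"] that by linarith
  qed
  fix a b assume "a \<in> set [0..<n]" "b \<in> set [0..<n]" "(f ^^ a) y = (f ^^ b) y"
  then show "a = b"
    using no_repeat by (metis atLeastLessThan_iff linorder_neqE_nat set_upt)
qed

lemma finite_self_map_distinct_periodic_orbit:
  assumes "finite A" "x \<in> A" "f ` A \<subseteq> A"
  shows "\<exists>y\<in>A. \<exists>n>0. (f ^^ n) y = y \<and> distinct (map (\<lambda>k. (f ^^ k) y) [0..<n])"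
proof -
  obtain y n0 where y: "y \<in> A" "0 < n0 \<and> (f ^^ n0) y = y"
    using finite_self_map_periodic_point[OF assms] by blast
  define n where "n = (LEAST n. 0 < n \<and> (f ^^ n) y = y)"
  have n: "0 < n" "(f ^^ n) y = y"
    using LeastI[of "\<lambda>n. 0 < n \<and> (f ^^ n) y = y", OF y(2)] unfolding n_def by auto
  have "(f ^^ m) y \<noteq> y" if "0 < m" "m < n" for m
    using not_less_Least[of m "\<lambda>n. 0 < n \<and> (f ^^ n) y = y"] that unfolding n_def by blast
  then have "distinct (map (\<lambda>k. (f ^^ k) y) [0..<n])"
    using least_period_orbit_distinct[OF n(2)] by blast
  with y(1) n show ?thesis
    by blast
qed

lemma graph_edge_not_loop:
  assumes "graph V E" shows "{x, x} \<notin> E"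
  using assms unfolding graph_def by (metis doubleton_eq_iff)

lemma graph_edge_in_vertices:
  assumes "graph V E" "{x, y} \<in> E" shows "y \<in> V"
  using assms unfolding graph_def by (metis doubleton_eq_iff)

lemma is_cycle_periodic_orbit:
  assumes edges: "\<forall>x\<in>V. {x, f x} \<in> E"
    and orbit_in_V: "\<And>k. (f ^^ k) y \<in> V"
    and period: "(f ^^ n) y = y"
    and distinct: "distinct (map (\<lambda>k. (f ^^ k) y) [0..<n])"
    and "3 \<le> n"
  shows "is_cycle V E (map (\<lambda>k. (f ^^ k) y) [0..<n])" (is "is_cycle V E ?cs")
  unfolding is_cycle_def
proof (intro conjI allI impI)
  fix k assume "k < length ?cs"
  then have "k < n" by simp
  moreover have "(f ^^ ((k + 1) mod n)) y = f ((f ^^ k) y)"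
    using funpow_mod_eq[OF period] by simp
  ultimately show "{?cs ! k, ?cs ! ((k + 1) mod length ?cs)} \<in> E"
    using edges orbit_in_V \<open>3 \<le> n\<close> by simp
qed (use assms in auto)

lemma forest_neighbour_map_swaps_edge:
  assumes G: "graph V E" and "V \<noteq> {}" and acyclic: "\<nexists>cs. is_cycle V E cs"
    and edges: "\<forall>x\<in>V. {x, f x} \<in> E"
  shows "\<exists>x\<in>V. f (f x) = x"
proof -
  have maps_to: "f ` V \<subseteq> V"
    using edges graph_edge_in_vertices[OF G] by blast
  have "finite V"
    using G by (simp add: graph_def)
  then obtain y n where y: "y \<in> V" "0 < n" "(f ^^ n) y = y"
    and dist: "distinct (map (\<lambda>k. (f ^^ k) y) [0..<n])"
    using finite_self_map_distinct_periodic_orbit[OF _ _ maps_to] \<open>V \<noteq> {}\<close> by blast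
  have orbit_in_V: "(f ^^ k) y \<in> V" for k
    by (induction k) (use y maps_to in \<open>simp_all add: image_subset_iff\<close>)
  consider "n = 1" | "n = 2" | "3 \<le> n"
    using \<open>0 < n\<close> by linarith
  then show ?thesis
  proof cases
    case 1
    then have "f y = y"
      using y(3) by simp
    then show ?thesis
      using y(1) edges graph_edge_not_loop[OF G] by metis
  next
    case 2
    then have "f (f y) = y"
      using y(3) by (simp add: numeral_2_eq_2)
    then show ?thesis
      using y(1) by blast
  next
    case 3
    then show ?thesis
      using is_cycle_periodic_orbit[OF edges orbit_in_V y(3) dist] acyclic by blast
  qed
qed

lemma symp_adj_in: "symp (adj_in E W)"
  unfolding adj_in_def by (rule sympI) (simp add: insert_commute)

lemma Br_eq_if_reachable:
  assumes "(adj_in ET (VT - {t}))\<^sup>*\<^sup>* s s'"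
  shows "Br VT ET t s = Br VT ET t s'"
proof -
  have "(adj_in ET (VT - {t}))\<^sup>*\<^sup>* s' s"
    using sympD[OF symp_rtranclp[OF symp_adj_in] assms] .
  then show ?thesis
    using assms unfolding Br_def by (auto intro: rtranclp_trans)
qed

text \<open>The last step out of t on a walk from t to s enters the branch of s.\<close>

lemma reachable_avoiding_through_neighbour:
  assumes "(adj_in ET VT)\<^sup>*\<^sup>* t s" "s \<noteq> t"
  shows "\<exists>t'. {t, t'} \<in> ET \<and> (adj_in ET (VT - {t}))\<^sup>*\<^sup>* t' s"
  using assms
proof (induction rule: rtranclp_induct)
  case (step y z)
  show ?case
  proof (cases "y = t")
    case True
    then show ?thesis using step(2) by (auto simp: adj_in_def)
  next
    case False
    then obtain t' where "{t, t'} \<in> ET" "(adj_in ET (VT - {t}))\<^sup>*\<^sup>* t' y"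
      using step.IH by blast
    moreover have "adj_in ET (VT - {t}) y z"
      using step(2) False step.prems by (auto simp: adj_in_def)
    ultimately show ?thesis
      by (meson rtranclp.rtrancl_into_rtrancl)
  qed
qed simp

lemma Br_eq_Br_neighbour:
  assumes "tree VT ET" "t \<in> VT" "s \<in> VT" "s \<noteq> t"
  shows "\<exists>t'. {t, t'} \<in> ET \<and> Br VT ET t s = Br VT ET t t'"
proof -
  have "(adj_in ET VT)\<^sup>*\<^sup>* t s"
    using assms(1-3) by (simp add: tree_def connected_set_def)
  then obtain t' where "{t, t'} \<in> ET" "(adj_in ET (VT - {t}))\<^sup>*\<^sup>* t' s"
    using reachable_avoiding_through_neighbour assms(4) by metis
  then show ?thesis
    using Br_eq_if_reachable by metis
qed

text \<open>
  Fencing only makes Br_t(C) independent of the vertex of C - V_t it is read off; Br_cycle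
  fixes one such vertex by choice.
\<close>

lemma Br_cycle_eq_Br_neighbour:
  assumes TD: "tree_decomposition V E VT ET bag" and "t \<in> VT"
    and "set C \<subseteq> V" "\<not> set C \<subseteq> bag t"
  shows "\<exists>t'. {t, t'} \<in> ET \<and> Br_cycle VT ET bag t C = Br VT ET t t'"
proof -
  define v where "v = (SOME v. v \<in> set C \<and> v \<notin> bag t)"
  have v: "v \<in> V" "v \<notin> bag t"
    unfolding v_def using assms(3,4) by (metis (mono_tags, lifting) someI_ex subsetD subsetI)+
  define s where "s = (SOME s. s \<in> VT \<and> v \<in> bag s)"
  have s: "s \<in> VT" "v \<in> bag s"
    unfolding s_def using TD v(1) unfolding tree_decomposition_def
    by (metis (mono_tags, lifting) someI_ex)+
  have "Br_cycle VT ET bag t C = Br VT ET t s"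
    unfolding Br_cycle_def Br_vertex_def v_def[symmetric] s_def[symmetric] ..
  moreover have "s \<noteq> t"
    using s v by blast
  ultimately show ?thesis
    using Br_eq_Br_neighbour[OF _ \<open>t \<in> VT\<close> s(1)] TD by (simp add: tree_decomposition_def)
qed

theorem lemma5p3:
  fixes V :: "'a set" and E :: "'a set set"
    and VT :: "'n set" and ET :: "'n set set" and bag :: "'n \<Rightarrow> 'a set"
    and \<C> :: "'n \<Rightarrow> 'a list set"
  assumes "graph V E"
    and "tree_decomposition V E VT ET bag"
    and "\<forall>t\<in>VT. \<forall>C\<in>\<C> t. is_cycle V E C \<and> fences V E (bag t) C \<and> \<not> set C \<subseteq> bag t"
    and "\<forall>t\<in>VT. \<C> t \<noteq> {}"
  shows "\<exists>t t'. {t, t'} \<in> ET \<and> (\<exists>C\<in>\<C> t. \<exists>D\<in>\<C> t'.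
           Br_cycle VT ET bag t C = Br VT ET t t' \<and> Br_cycle VT ET bag t' D = Br VT ET t' t)"
proof -
  have T: "tree VT ET"
    using assms(2) by (simp add: tree_decomposition_def)
  have "\<forall>t\<in>VT. \<exists>t'. \<exists>C\<in>\<C> t. {t, t'} \<in> ET \<and> Br_cycle VT ET bag t C = Br VT ET t t'"
  proof
    fix t assume "t \<in> VT"
    then obtain C where "C \<in> \<C> t" "set C \<subseteq> V" "\<not> set C \<subseteq> bag t"
      using assms(3,4) by (fastforce simp: is_cycle_def)
    then show "\<exists>t'. \<exists>C\<in>\<C> t. {t, t'} \<in> ET \<and> Br_cycle VT ET bag t C = Br VT ET t t'"
      using Br_cycle_eq_Br_neighbour[OF assms(2) \<open>t \<in> VT\<close>] by blast
  qed
  then obtain f where f: "\<forall>t\<in>VT. \<exists>C\<in>\<C> t. {t, f t} \<in> ET \<and> Br_cycle VT ET bag t C = Br VT ET t (f t)"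
    by (metis bchoice)
  obtain t where t: "t \<in> VT" "f (f t) = t"
    using forest_neighbour_map_swaps_edge[of VT ET f] T f by (auto simp: tree_def)
  moreover have "f t \<in> VT"
    using f t(1) T graph_edge_in_vertices by (fastforce simp: tree_def)
  ultimately show ?thesis
    using f by metis
qed

end
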